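(* Under Total Store Order, in the limit $m\to\infty$: $\Pr[L_0]=1/3$, and for every integer $\mu>0$, $\Pr[L_\mu]\ge \tfrac{4}{7}\cdot 2^{-\mu}$.
   Context: Fix $m\ge 1$. A random program is a sequence $x_1,\dots,x_{m+2}$ of memory operations, each with a type in $\{\mathrm{LD},\mathrm{ST}\}$: $x_1,\dots,x_m$ have i.i.d. types, each $\mathrm{ST}$ with probability $1/2$ and $\mathrm{LD}$ with probability $1/2$; $x_{m+1}$ (the critical load) has type $\mathrm{LD}$ and $x_{m+2}$ (the critical store) has type $\mathrm{ST}$. The initial order is $S_0=(x_1,\dots,x_{m+2})$. A memory model is specified by the set of ordered type pairs $(\tau_1,\tau_2)$ for which an instruction of type $\tau_2$ may be moved ahead of an immediately preceding instruction of type $\tau_1$: Sequential Consistency (SC) allows no pair; Total Store Order (TSO) allows only the pair $(\mathrm{ST},\mathrm{LD})$ (a load may move ahead of a preceding store); Weak Ordering (WO) allows all four pairs. The settling process runs rounds $r=1,\dots,m+2$. Before round $r$, the current order $S_{r-1}$ consists of $x_1,\dots,x_{r-1}$ in some order in positions $1,\dots,r-1$, followed by $x_r,\dots,x_{m+2}$ in positions $r,\dots,m+2$. In round $r$, instruction $x_r$ (starting at position $r$) repeatedly attempts to swap with the instruction immediately preceding it in the current order: the attempt fails automatically if the pair (type of the preceding instruction, type of $x_r$) is not allowed by the memory model, or if $x_r$ is the critical store and the preceding instruction is the critical load; otherwise the attempt succeeds independently with probability $1/2$. The round ends when an attempt fails or $x_r$ reaches position $1$; the resulting order is $S_r$. For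 an integer $\mu\ge 0$ with $\mu<m$, $L_\mu$ is the event that in the order $S_m$ (the order just before the critical load is settled) the instructions at positions $m-\mu+1,\dots,m$ all have type $\mathrm{ST}$ and the instruction at position $m-\mu$ has type $\mathrm{LD}$; i.e. exactly $\mu$ stores immediately precede the critical load in $S_m$. *)

theory Defs
  imports "HOL-Probability.Probability"
begin

datatype optype = LD | ST

text \<open>A memory model = set of allowed ordered type pairs (preceding type, moving type).\<close>
definition SC :: "(optype \<times> optype) set" where "SC = {}"
definition TSO :: "(optype \<times> optype) set" where "TSO = {(ST, LD)}"
definition WO :: "(optype \<times> optype) set" where "WO = UNIV"

text \<open>Instructions are identified by their index 1..m+2; x_(m+1) is the critical load,
 x_(m+2) the critical store.\<close>
definition tyf :: "nat \<Rightarrow> optype list \<Rightarrow> nat \<Rightarrow> optype" where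
  "tyf m ts i = (if 1 \<le> i \<and> i \<le> m then ts ! (i - 1) else if i = m + 1 then LD else ST)"

text \<open>One round: instruction x moves backwards through the preceding instructions.
 The preceding instructions are given in reversed order (head = immediately preceding).
 The result is the new order of the preceding instructions together with x, again reversed.\<close>
fun settle :: "(optype \<times> optype) set \<Rightarrow> (nat \<Rightarrow> optype) \<Rightarrow> nat \<Rightarrow> nat list \<Rightarrow> nat \<Rightarrow> nat list pmf" where
  "settle A ty m [] x = return_pmf [x]"
| "settle A ty m (y # ys) x =
     (if (ty y, ty x) \<notin> A \<or> (x = m + 2 \<and> y = m + 1) then return_pmf (x # y # ys)
      else bind_pmf (bernoulli_pmf (1/2))
             (\<lambda>b. if b then map_pmf (\<lambda>zs. y # zs) (settle A ty m ys x)
                  else return_pmf (x # y # ys)))"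

text \<open>run A ty m r = distribution of the order of x_1..x_r in positions 1..r after round r
 (the remaining positions r+1..m+2 hold x_(r+1),...,x_(m+2) in order).\<close>
fun run :: "(optype \<times> optype) set \<Rightarrow> (nat \<Rightarrow> optype) \<Rightarrow> nat \<Rightarrow> nat \<Rightarrow> nat list pmf" where
  "run A ty m 0 = return_pmf []"
| "run A ty m (Suc r) = bind_pmf (run A ty m r) (\<lambda>p. map_pmf rev (settle A ty m (rev p) (Suc r)))"

definition coin_type :: "optype pmf" where
  "coin_type = map_pmf (\<lambda>b. if b then ST else LD) (bernoulli_pmf (1/2))"

fun rand_types :: "nat \<Rightarrow> optype list pmf" where
  "rand_types 0 = return_pmf []"
| "rand_types (Suc n) = bind_pmf (rand_types n) (\<lambda>ts. map_pmf (\<lambda>t. ts @ [t]) coin_type)"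

text \<open>Joint tso_experiment: (types of x_1..x_m, order S_m restricted to positions 1..m).\<close>
definition tso_experiment :: "(optype \<times> optype) set \<Rightarrow> nat \<Rightarrow> (optype list \<times> nat list) pmf" where
  "tso_experiment A m = bind_pmf (rand_types m)
      (\<lambda>ts. map_pmf (\<lambda>ordr. (ts, ordr)) (run A (tyf m ts) m m))"

definition L_event :: "nat \<Rightarrow> nat \<Rightarrow> (optype list \<times> nat list) set" where
  "L_event m mu = {(ts, ordr). (\<forall>j\<in>{m - mu + 1..m}. tyf m ts (ordr ! (j - 1)) = ST)
                           \<and> tyf m ts (ordr ! (m - mu - 1)) = LD}"

definition prob_L :: "(optype \<times> optype) set \<Rightarrow> nat \<Rightarrow> nat \<Rightarrow> real" where
  "prob_L A m mu = measure_pmf.prob (tso_experiment A m) (L_event m mu)"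

end

theory Submission
  imports Defs
begin

text \<open>
  Under TSO only a load may overtake a store.  Hence a newly settled store
  stays at the end of the order, while a newly settled load overtakes the trailing
  stores one at a time, each with probability 1/2, and stops for good at the first load.
  Consequently the number K of trailing stores of the settled prefix is a Markov chain
  on the naturals: with probability 1/2 (a store) K becomes K+1, and with probability
  1/2 (a load) K becomes j < K with probability 2^-(j+1) and stays K with probability 2^-K.

  A general lemma on affine recurrences with a convergent forcing
  term then yields, by strong induction on k, that every p_m(k) converges; the limits
  satisfy l_0 = 1/3, l_1 = 2/7 and l_k >= l_(k-1)/2, which gives the theorem.
\<close>

section \<open>The trailing-store chain\<close>

text \<open>The number of trailing stores left behind a load that settles after k trailing
  stores: it passes each of them with probability 1/2.\<close>
fun load_descent :: "nat \<Rightarrow> nat pmf" where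
  "load_descent 0 = return_pmf 0"
| "load_descent (Suc k) = bind_pmf (bernoulli_pmf (1/2))
     (\<lambda>b. if b then map_pmf Suc (load_descent k) else return_pmf 0)"

text \<open>One transition of the chain: a fresh instruction is a store or a load with
  probability 1/2 each.\<close>
definition count_step :: "nat \<Rightarrow> nat pmf" where
  "count_step k = bind_pmf (bernoulli_pmf (1/2))
     (\<lambda>b. if b then return_pmf (Suc k) else load_descent k)"

fun store_chain :: "nat \<Rightarrow> nat pmf" where
  "store_chain 0 = return_pmf 0"
| "store_chain (Suc m) = bind_pmf (store_chain m) count_step"

section \<open>Reduction of the settling process to the chain\<close>

text \<open>The number of stores at the end of an order, where the order is given back to
  front (the representation used by settle).\<close>
definition trailing_stores :: "(nat \<Rightarrow> optype) \<Rightarrow> nat list \<Rightarrow> nat" where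
  "trailing_stores ty rs = length (takeWhile (\<lambda>i. ty i = ST) rs)"

lemma settle_trailing_stores:
  assumes "x \<noteq> m + 2"
  shows "map_pmf (trailing_stores ty) (settle TSO ty m rs x) =
     (if ty x = ST then return_pmf (Suc (trailing_stores ty rs))
      else load_descent (trailing_stores ty rs))"
proof (induction rs)
  case Nil
  then show ?case by (cases "ty x") (auto simp: trailing_stores_def)
next
  case (Cons y rs)
  show ?case
  proof (cases "ty x = LD \<and> ty y = ST")
    case True
    have "map_pmf (trailing_stores ty) (settle TSO ty m (y # rs) x) =
      bind_pmf (bernoulli_pmf (1/2)) (\<lambda>b. if b
        then map_pmf Suc (map_pmf (trailing_stores ty) (settle TSO ty m rs x))
        else return_pmf 0)"
      using True assms
      by (auto simp: TSO_def map_bind_pmf map_pmf_comp trailing_stores_def intro!: bind_pmf_cong)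
    also have "\<dots> = load_descent (Suc (trailing_stores ty rs))"
    proof -
      have "map_pmf (trailing_stores ty) (settle TSO ty m rs x) = load_descent (trailing_stores ty rs)"
        using Cons.IH True by simp
      then show ?thesis by (simp only: load_descent.simps)
    qed
    also have "Suc (trailing_stores ty rs) = trailing_stores ty (y # rs)"
      using True by (simp add: trailing_stores_def)
    finally show ?thesis using True by simp
  next
    case False
    then show ?thesis by (cases "ty x"; cases "ty y") (auto simp: TSO_def trailing_stores_def)
  qed
qed

lemma settle_set:
  "zs \<in> set_pmf (settle A ty m ys x) \<Longrightarrow> set zs = insert x (set ys) \<and> length zs = Suc (length ys)"
  by (induction ys arbitrary: zs) (auto split: if_splits)

lemma settle_cong:
  "(\<forall>i \<in> insert x (set ys). ty i = ty' i) \<Longrightarrow> settle A ty m ys x = settle A ty' m ys x"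
proof (induction ys)
  case (Cons y ys)
  then have "settle A ty m ys x = settle A ty' m ys x" by simp
  with Cons.prems show ?case by (simp only: settle.simps) simp
qed simp

lemma run_set:
  "p \<in> set_pmf (run A ty m r) \<Longrightarrow> set p = {1..r} \<and> length p = r"
proof (induction r arbitrary: p)
  case (Suc r)
  then obtain q zs where q: "q \<in> set_pmf (run A ty m r)"
    and zs: "zs \<in> set_pmf (settle A ty m (rev q) (Suc r))" and p: "p = rev zs"
    by auto
  from Suc.IH[OF q] settle_set[OF zs] p show ?case by auto
qed simp

lemma run_cong:
  "(\<forall>i\<in>{1..r}. ty i = ty' i) \<Longrightarrow> run A ty m r = run A ty' m r"
proof (induction r)
  case (Suc r)
  then have IH: "run A ty m r = run A ty' m r" by auto
  show ?case
    unfolding run.simps IH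
  proof (intro bind_pmf_cong refl)
    fix p assume "p \<in> set_pmf (run A ty' m r)"
    then have "set p = {1..r}" using run_set by blast
    then show "map_pmf rev (settle A ty m (rev p) (Suc r)) = map_pmf rev (settle A ty' m (rev p) (Suc r))"
      using Suc.prems by (subst settle_cong[of "Suc r" "rev p" ty ty']) auto
  qed
qed simp

lemma rand_types_length: "ts \<in> set_pmf (rand_types r) \<Longrightarrow> length ts = r"
  by (induction r arbitrary: ts) auto

lemma tyf_append:
  assumes "length ts = r" "r < m"
  shows "i \<in> {1..r} \<Longrightarrow> tyf m (ts @ [t]) i = tyf m ts i"
    and "tyf m (ts @ [t]) (Suc r) = t"
  using assms by (auto simp: tyf_def nth_append)

definition prefix_experiment :: "nat \<Rightarrow> nat \<Rightarrow> (optype list \<times> nat list) pmf" where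
  "prefix_experiment m r = bind_pmf (rand_types r)
     (\<lambda>ts. map_pmf (\<lambda>q. (ts, q)) (run TSO (tyf m ts) m r))"

definition suffix_stores :: "nat \<Rightarrow> optype list \<times> nat list \<Rightarrow> nat" where
  "suffix_stores m = (\<lambda>(ts, q). trailing_stores (tyf m ts) (rev q))"

text \<open>One more round: draw the type of x_(r+1) and settle it; by run_cong
  the random type may be drawn after the first r rounds.\<close>
lemma prefix_experiment_Suc:
  assumes "r < m"
  shows "prefix_experiment m (Suc r) = bind_pmf (rand_types r) (\<lambda>ts.
     bind_pmf (run TSO (tyf m ts) m r) (\<lambda>q. bind_pmf coin_type (\<lambda>t.
       map_pmf (\<lambda>zs. (ts @ [t], rev zs)) (settle TSO (tyf m (ts @ [t])) m (rev q) (Suc r)))))"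
  unfolding prefix_experiment_def rand_types.simps bind_assoc_pmf bind_map_pmf
proof (intro bind_pmf_cong refl)
  fix ts assume "ts \<in> set_pmf (rand_types r)"
  then have "length ts = r" by (rule rand_types_length)
  then have "run TSO (tyf m (ts @ [t])) m r = run TSO (tyf m ts) m r" for t
    using assms by (intro run_cong) (simp add: tyf_append)
  then show "bind_pmf coin_type (\<lambda>t. map_pmf (Pair (ts @ [t])) (run TSO (tyf m (ts @ [t])) m (Suc r)))
    = bind_pmf (run TSO (tyf m ts) m r) (\<lambda>q. bind_pmf coin_type (\<lambda>t.
        map_pmf (\<lambda>zs. (ts @ [t], rev zs)) (settle TSO (tyf m (ts @ [t])) m (rev q) (Suc r))))"
    by (subst bind_commute_pmf) (simp add: map_bind_pmf map_pmf_comp)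
qed

lemma settle_fresh_instruction:
  assumes "length ts = r" "set q = {1..r}" "r < m"
  shows "bind_pmf coin_type (\<lambda>t. map_pmf (\<lambda>zs. suffix_stores m (ts @ [t], rev zs))
            (settle TSO (tyf m (ts @ [t])) m (rev q) (Suc r))) = count_step (suffix_stores m (ts, q))"
proof -
  have old: "trailing_stores (tyf m (ts @ [t])) (rev q) = suffix_stores m (ts, q)" for t
    unfolding suffix_stores_def trailing_stores_def using assms
    by (auto intro!: arg_cong[where f=length] takeWhile_cong simp: tyf_append)
  have "map_pmf (\<lambda>zs. suffix_stores m (ts @ [t], rev zs)) (settle TSO (tyf m (ts @ [t])) m (rev q) (Suc r))
      = (if t = ST then return_pmf (Suc (suffix_stores m (ts, q))) else load_descent (suffix_stores m (ts, q)))"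
    for t
    using settle_trailing_stores[of "Suc r" m "tyf m (ts @ [t])" "rev q"] assms
    by (simp add: suffix_stores_def old tyf_append)
  then show ?thesis
    by (simp add: coin_type_def bind_map_pmf count_step_def) (rule bind_pmf_cong, auto)
qed

lemma suffix_stores_distribution:
  "r \<le> m \<Longrightarrow> map_pmf (suffix_stores m) (prefix_experiment m r) = store_chain r"
proof (induction r)
  case 0
  then show ?case
    by (simp add: prefix_experiment_def suffix_stores_def trailing_stores_def bind_return_pmf)
next
  case (Suc r)
  then have "r < m" by simp
  have "map_pmf (suffix_stores m) (prefix_experiment m (Suc r))
      = bind_pmf (rand_types r) (\<lambda>ts. bind_pmf (run TSO (tyf m ts) m r)
          (\<lambda>q. count_step (suffix_stores m (ts, q))))"
    unfolding prefix_experiment_Suc[OF \<open>r < m\<close>] map_bind_pmf map_pmf_comp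
  proof (intro bind_pmf_cong refl)
    fix ts q assume "ts \<in> set_pmf (rand_types r)" "q \<in> set_pmf (run TSO (tyf m ts) m r)"
    with \<open>r < m\<close> show "bind_pmf coin_type (\<lambda>t. map_pmf (\<lambda>zs. suffix_stores m (ts @ [t], rev zs))
        (settle TSO (tyf m (ts @ [t])) m (rev q) (Suc r))) = count_step (suffix_stores m (ts, q))"
      by (intro settle_fresh_instruction) (auto dest: rand_types_length run_set)
  qed
  also have "\<dots> = bind_pmf (map_pmf (suffix_stores m) (prefix_experiment m r)) count_step"
    by (simp add: prefix_experiment_def bind_assoc_pmf bind_map_pmf map_bind_pmf)
  finally show ?case using Suc by simp
qed

lemma length_takeWhile_eq_iff:
  "n < length xs \<Longrightarrow> length (takeWhile P xs) = n \<longleftrightarrow> (\<forall>i<n. P (xs ! i)) \<and> \<not> P (xs ! n)"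
proof (induction xs arbitrary: n)
  case (Cons x xs)
  then show ?case by (cases n) (auto simp: All_less_Suc2)
qed simp

lemma L_event_iff:
  assumes "length q = m" "mu < m"
  shows "(ts, q) \<in> L_event m mu \<longleftrightarrow> suffix_stores m (ts, q) = mu"
proof -
  define P where "P = (\<lambda>i. tyf m ts i = ST)"
  have "suffix_stores m (ts, q) = mu \<longleftrightarrow> (\<forall>i<mu. P (q ! (m - Suc i))) \<and> \<not> P (q ! (m - mu - 1))"
    unfolding suffix_stores_def trailing_stores_def P_def
    using assms by (simp add: length_takeWhile_eq_iff rev_nth)
  also have "(\<forall>i<mu. P (q ! (m - Suc i))) \<longleftrightarrow> (\<forall>j\<in>{m - mu + 1..m}. P (q ! (j - 1)))"
  proof
    assume H: "\<forall>i<mu. P (q ! (m - Suc i))"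
    show "\<forall>j\<in>{m - mu + 1..m}. P (q ! (j - 1))"
    proof
      fix j assume "j \<in> {m - mu + 1..m}"
      then have "m - j < mu" "m - Suc (m - j) = j - 1" using assms by auto
      then show "P (q ! (j - 1))" using H by metis
    qed
  next
    assume H: "\<forall>j\<in>{m - mu + 1..m}. P (q ! (j - 1))"
    show "\<forall>i<mu. P (q ! (m - Suc i))"
    proof (intro allI impI)
      fix i assume "i < mu"
      then have "m - i \<in> {m - mu + 1..m}" "m - i - 1 = m - Suc i" using assms by auto
      then show "P (q ! (m - Suc i))" using H by metis
    qed
  qed
  moreover have "\<not> P i \<longleftrightarrow> tyf m ts i = LD" for i
    unfolding P_def by (cases "tyf m ts i") auto
  ultimately show ?thesis unfolding L_event_def P_def by simp
qed

lemma prob_L_eq_store_chain: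
  assumes "mu < m"
  shows "prob_L TSO m mu = pmf (store_chain m) mu"
proof -
  let ?E = "prefix_experiment m m"
  have "x \<in> L_event m mu \<longleftrightarrow> suffix_stores m x = mu" if "x \<in> set_pmf ?E" for x
    using that assms by (auto simp: prefix_experiment_def L_event_iff dest!: run_set)
  then have "L_event m mu \<inter> set_pmf ?E = suffix_stores m -` {mu} \<inter> set_pmf ?E"
    by blast
  then have "measure ?E (L_event m mu) = measure ?E (suffix_stores m -` {mu})"
    by (metis measure_Int_set_pmf)
  also have "\<dots> = measure (map_pmf (suffix_stores m) ?E) {mu}"
    by simp
  also have "\<dots> = pmf (store_chain m) mu"
    by (simp add: suffix_stores_distribution measure_pmf_single)
  finally show ?thesis
    by (simp add: prob_L_def tso_experiment_def prefix_experiment_def)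
qed

lemma pmf_map_Suc: "pmf (map_pmf Suc M) k = (if k = 0 then 0 else pmf M (k - 1))"
proof (cases k)
  case 0
  have "Suc -` {0} = {}" by auto
  then show ?thesis using 0 by (simp add: pmf_map)
qed (simp add: pmf_map_inj')

lemma pmf_load_descent:
  "pmf (load_descent x) k = (if k < x then (1/2)^(k+1) else if k = x then (1/2)^k else 0)"
proof (induction x arbitrary: k)
  case (Suc x)
  have "pmf (load_descent (Suc x)) k
      = pmf (map_pmf Suc (load_descent x)) k / 2 + pmf (return_pmf (0::nat)) k / 2"
    by (simp add: pmf_bind)
  then show ?case by (cases k) (auto simp: pmf_map_Suc Suc.IH indicator_def)
qed (simp add: indicator_def)

lemma expectation_load_descent:
  fixes M :: "nat pmf"
  shows "measure_pmf.expectation M (\<lambda>x. pmf (load_descent x) k)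
    = (1/2)^(k+1) * measure_pmf.prob M {k<..} + (1/2)^k * pmf M k"
proof -
  have "pmf (load_descent x) k = (1/2)^(k+1) * indicator {k<..} x + (1/2)^k * indicator {k} x" for x
    by (simp add: pmf_load_descent indicator_def)
  then show ?thesis
    by (simp add: Bochner_Integration.integral_add measure_pmf.emeasure_eq_measure measure_pmf_single)
qed

lemma pmf_bind_count_step:
  fixes M :: "nat pmf"
  shows "pmf (bind_pmf M count_step) k = (if k = 0 then 0 else pmf M (k - 1) / 2)
     + (1/2)^(k+2) * pmf M k + (1/2)^(k+2) * (1 - (\<Sum>i<k. pmf M i))"
proof -
  have "bind_pmf M count_step = bind_pmf (bernoulli_pmf (1/2))
      (\<lambda>b. if b then map_pmf Suc M else bind_pmf M load_descent)"
    unfolding count_step_def by (subst bind_commute_pmf) (auto simp: map_pmf_def intro!: bind_pmf_cong)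
  then have step: "pmf (bind_pmf M count_step) k = pmf (map_pmf Suc M) k / 2
      + ((1/2)^(k+1) * measure_pmf.prob M {k<..} + (1/2)^k * pmf M k) / 2"
    by (simp add: pmf_bind expectation_load_descent)
  have tail: "measure_pmf.prob M {k<..} = 1 - (\<Sum>i<k. pmf M i) - pmf M k"
  proof -
    have "measure_pmf.prob M {k<..} = 1 - measure_pmf.prob M {..k}"
      by (subst measure_pmf.prob_compl[symmetric]) (auto intro!: arg_cong[where f="measure_pmf.prob M"])
    then show ?thesis by (simp add: measure_measure_pmf_finite lessThan_Suc_atMost[symmetric])
  qed
  have shift: "pmf (map_pmf Suc M) k / 2 = (if k = 0 then 0 else pmf M (k - 1) / 2)"
    by (simp add: pmf_map_Suc)
  have "((1/2)^(k+1) * (1 - S - a) + (1/2)^k * a) / 2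
      = (1/2)^(k+2) * a + (1/2)^(k+2) * (1 - S)" for a S :: real
    by (simp add: power_add field_simps)
  then show ?thesis
    unfolding step tail shift by (simp only: add.assoc)
qed

section \<open>Affine recurrences\<close>

lemma contraction_unroll:
  fixes y :: "nat \<Rightarrow> real"
  assumes "0 \<le> c" "0 \<le> e" and step: "\<And>n. n \<ge> M \<Longrightarrow> \<bar>y (Suc n)\<bar> \<le> c * \<bar>y n\<bar> + (1 - c) * e"
  shows "\<bar>y (M + d)\<bar> \<le> c ^ d * \<bar>y M\<bar> + e"
proof (induction d)
  case 0
  show ?case using \<open>0 \<le> e\<close> by simp
next
  case (Suc d)
  have "\<bar>y (M + Suc d)\<bar> \<le> c * \<bar>y (M + d)\<bar> + (1 - c) * e" using step[of "M + d"] by simp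
  also have "\<dots> \<le> c * (c ^ d * \<bar>y M\<bar> + e) + (1 - c) * e"
    using mult_left_mono[OF Suc.IH \<open>0 \<le> c\<close>] by simp
  also have "\<dots> = c ^ Suc d * \<bar>y M\<bar> + e" by (simp add: algebra_simps)
  finally show ?case .
qed

lemma affine_recurrence_limit:
  fixes x b :: "nat \<Rightarrow> real"
  assumes c: "0 \<le> c" "c < 1" and b: "b \<longlonglongrightarrow> \<beta>"
    and rec: "\<And>n. x (Suc n) = c * x n + b n"
  shows "x \<longlonglongrightarrow> \<beta> / (1 - c)"
proof (rule LIMSEQ_I)
  fix r :: real assume "0 < r"
  define L where "L = \<beta> / (1 - c)"
  define y where "y n = x n - L" for n
  have y_rec: "y (Suc n) = c * y n + (b n - \<beta>)" for n
    using rec[of n] c unfolding y_def L_def by (simp add: field_simps)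
  have "0 < (1 - c) * (r / 2)" using c \<open>0 < r\<close> by simp
  with b obtain M where M: "\<And>n. n \<ge> M \<Longrightarrow> \<bar>b n - \<beta>\<bar> < (1 - c) * (r / 2)"
    unfolding LIMSEQ_iff by (metis real_norm_def)
  have "\<bar>y (Suc n)\<bar> \<le> c * \<bar>y n\<bar> + (1 - c) * (r / 2)" if "n \<ge> M" for n
  proof -
    have "\<bar>y (Suc n)\<bar> \<le> \<bar>c * y n\<bar> + \<bar>b n - \<beta>\<bar>" unfolding y_rec by (rule abs_triangle_ineq)
    then show ?thesis using M[OF that] c by (simp add: abs_mult)
  qed
  then have unrolled: "\<bar>y (M + d)\<bar> \<le> c ^ d * \<bar>y M\<bar> + r / 2" for d
    using c \<open>0 < r\<close> by (intro contraction_unroll) auto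
  have "(\<lambda>d. c ^ d * \<bar>y M\<bar>) \<longlonglongrightarrow> 0"
    using c by (intro tendsto_mult_left_zero LIMSEQ_power_zero) simp
  then obtain D where D: "\<And>d. d \<ge> D \<Longrightarrow> c ^ d * \<bar>y M\<bar> < r / 2"
    using \<open>0 < r\<close> unfolding LIMSEQ_iff by (metis half_gt_zero real_norm_def abs_less_iff diff_zero)
  show "\<exists>n0. \<forall>n\<ge>n0. norm (x n - \<beta> / (1 - c)) < r"
  proof (intro exI allI impI)
    fix n assume "n \<ge> M + D"
    then have "n - M \<ge> D" "M + (n - M) = n" by auto
    then have "\<bar>y n\<bar> < r"
      using unrolled[of "n - M"] D[of "n - M"] by simp
    then show "norm (x n - \<beta> / (1 - c)) < r" by (simp add: y_def L_def)
  qed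
qed

section \<open>Limits of the chain\<close>

text \<open>The probability that the chain stays at k during one transition (a load that
  settles behind k trailing stores and passes all of them).\<close>
definition stay_prob :: "nat \<Rightarrow> real" where
  "stay_prob k = (1/2) ^ (k + 2)"

definition limit_prob :: "nat \<Rightarrow> real" where
  "limit_prob k = lim (\<lambda>m. pmf (store_chain m) k)"

text \<open>The limit of the part of the recurrence for state k that does not involve state k.\<close>
definition limit_inflow :: "nat \<Rightarrow> real" where
  "limit_inflow k = (if k = 0 then 0 else limit_prob (k - 1) / 2)
     + stay_prob k * (1 - (\<Sum>i<k. limit_prob i))"

lemma stay_prob_bounds: "0 \<le> stay_prob k" "stay_prob k < 1"
proof -
  have "(1/2::real) ^ (k + 2) \<le> (1/2) ^ 1" by (rule power_decreasing) auto
  then show "0 \<le> stay_prob k" "stay_prob k < 1" by (auto simp: stay_prob_def)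
qed

text \<open>Every state probability converges; by strong induction on the state, since the
  recurrence for state k is affine with a forcing term built from states below k.\<close>
lemma store_chain_tendsto_fixpoint:
  "(\<lambda>m. pmf (store_chain m) k) \<longlonglongrightarrow> limit_inflow k / (1 - stay_prob k)"
proof (induction k rule: less_induct)
  case (less k)
  have below: "(\<lambda>m. pmf (store_chain m) i) \<longlonglongrightarrow> limit_prob i" if "i < k" for i
    using less[OF that] unfolding limit_prob_def by (simp add: limI)
  define b where "b m = (if k = 0 then 0 else pmf (store_chain m) (k - 1) / 2)
      + stay_prob k * (1 - (\<Sum>i<k. pmf (store_chain m) i))" for m
  have b_lim: "b \<longlonglongrightarrow> limit_inflow k"
    unfolding b_def limit_inflow_def
    using below[of "k - 1"] below
    by (cases "k = 0") (auto intro!: tendsto_intros)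
  have rec: "pmf (store_chain (Suc m)) k = stay_prob k * pmf (store_chain m) k + b m" for m
    using pmf_bind_count_step[of "store_chain m" k] unfolding b_def stay_prob_def by simp
  show ?case
    using affine_recurrence_limit[OF stay_prob_bounds b_lim rec] .
qed

lemma limit_prob_eq: "limit_prob k = limit_inflow k / (1 - stay_prob k)"
  unfolding limit_prob_def using store_chain_tendsto_fixpoint by (rule limI)

lemma store_chain_tendsto: "(\<lambda>m. pmf (store_chain m) k) \<longlonglongrightarrow> limit_prob k"
  using store_chain_tendsto_fixpoint limit_prob_eq by simp

lemma limit_prob_nonneg: "0 \<le> limit_prob k"
  by (rule LIMSEQ_le_const[OF store_chain_tendsto]) auto

lemma limit_prob_sum_le_1: "(\<Sum>i<k. limit_prob i) \<le> 1"
proof (rule LIMSEQ_le_const2)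
  show "(\<lambda>m. \<Sum>i<k. pmf (store_chain m) i) \<longlonglongrightarrow> (\<Sum>i<k. limit_prob i)"
    by (intro tendsto_sum store_chain_tendsto)
  show "\<exists>N. \<forall>m\<ge>N. (\<Sum>i<k. pmf (store_chain m) i) \<le> 1"
    by (auto simp: measure_measure_pmf_finite[symmetric] measure_pmf.prob_le_1)
qed

lemma limit_prob_0: "limit_prob 0 = 1/3"
  using limit_prob_eq[of 0] by (simp add: limit_inflow_def stay_prob_def)

lemma limit_prob_1: "limit_prob 1 = 2/7"
  using limit_prob_eq[of 1] by (simp add: limit_inflow_def stay_prob_def limit_prob_0)

text \<open>Each limit is at least half the previous one: the inflow from state k-1 alone
  contributes half of its limit.\<close>
lemma limit_prob_half:
  assumes "k \<ge> 1"
  shows "limit_prob (k - 1) / 2 \<le> limit_prob k"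
proof -
  have inflow: "limit_prob (k - 1) / 2 \<le> limit_inflow k"
    using assms stay_prob_bounds(1)[of k] limit_prob_sum_le_1[of k]
    by (simp add: limit_inflow_def)
  moreover have "limit_inflow k \<le> limit_inflow k / (1 - stay_prob k)"
    using inflow limit_prob_nonneg[of "k - 1"] stay_prob_bounds[of k]
    by (simp add: le_divide_eq mult_left_le)
  ultimately show ?thesis using limit_prob_eq[of k] by linarith
qed

lemma limit_prob_lower_bound: "k \<ge> 1 \<Longrightarrow> 4/7 * (1/2) ^ k \<le> limit_prob k"
proof (induction k rule: dec_induct)
  case base
  show ?case using limit_prob_1 by simp
next
  case (step k)
  then show ?case using limit_prob_half[of "Suc k"] by simp
qed

text \<open>The probability of L_mu coincides with the chain probability once m > mu.\<close>
lemma prob_L_tendsto: "(\<lambda>m. prob_L TSO m mu) \<longlonglongrightarrow> limit_prob mu"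
proof -
  have "\<forall>\<^sub>F m in sequentially. pmf (store_chain m) mu = prob_L TSO m mu"
    unfolding eventually_sequentially by (metis prob_L_eq_store_chain Suc_le_lessD)
  then show ?thesis using store_chain_tendsto[of mu] by (simp only: tendsto_cong)
qed

theorem lemma1:
  shows "(\<lambda>m. prob_L TSO m 0) \<longlonglongrightarrow> 1/3
    \<and> (\<forall>mu::nat. mu > 0 \<longrightarrow>
         (\<exists>l. (\<lambda>m. prob_L TSO m mu) \<longlonglongrightarrow> l \<and> l \<ge> 4/7 * (1/2) ^ mu))"
proof (intro conjI allI impI)
  show "(\<lambda>m. prob_L TSO m 0) \<longlonglongrightarrow> 1/3"
    using prob_L_tendsto[of 0] by (simp add: limit_prob_0)
  fix mu :: nat assume "mu > 0"
  then show "\<exists>l. (\<lambda>m. prob_L TSO m mu) \<longlonglongrightarrow> l \<and> l \<ge> 4/7 * (1/2) ^ mu"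
    using prob_L_tendsto[of mu] limit_prob_lower_bound[of mu] by auto
qed

end
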